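(* Let $d\in\mathbb{N}$ and $N=2^d$. There exists a sequence of side information $a_{1:N}\in(\{0,1\}^d)^N$ such that for every probabilistic predictor $\rho$ there exists $\mathcal{S}\in\mathcal{P}_d$ such that, for the labels $x_t:=h_{\mathcal{S}}(a_t)$ ($t=1,\dots,N$), one has $\mathcal{L}_N(\rho)\ge d$.
   Context: $\mathcal{P}_d$ is the power set of $\{1,\dots,d\}$; for $\mathcal{S}\in\mathcal{P}_d$ and $a\in\{0,1\}^d$, $h_{\mathcal{S}}(a)=\bigwedge_{i\in\mathcal{S}}a^i$ (equal to $1$ if $\mathcal{S}=\emptyset$). A probabilistic predictor $\rho$ is a sequence of rules that at each time $t$, given past labels $x_{<t}$ and side information $a_{1:t}$, outputs a probability distribution $\rho_t(\cdot\mid x_{<t};a_{1:t})$ on $\{0,1\}$. Its cumulative log-loss is $\mathcal{L}_n(\rho):=-\log_2\prod_{t=1}^n\rho_t(x_t\mid x_{<t};a_{1:t})$ (possibly $+\infty$). *)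

theory Defs
  imports "HOL-Probability.Probability"
begin

text \<open>Side information vectors in {0,1}^d are bool lists of length d; coordinate i
(1-based in the paper) is list position i-1. Subsets S of {1..d} are subsets of {0..<d}.\<close>

definition hS :: "nat set \<Rightarrow> bool list \<Rightarrow> bool" where
  "hS S a = (\<forall>i\<in>S. a ! i)"

text \<open>A probabilistic predictor: at time t, given past labels x_1..x_{t-1} and side
information a_1..a_t, a distribution on {0,1} (= bool).\<close>
type_synonym predictor = "nat \<Rightarrow> bool list \<Rightarrow> bool list list \<Rightarrow> bool pmf"

definition seq_prob :: "predictor \<Rightarrow> (nat \<Rightarrow> bool) \<Rightarrow> (nat \<Rightarrow> bool list) \<Rightarrow> nat \<Rightarrow> real" where
  "seq_prob \<rho> x a n = (\<Prod>t\<in>{1..n}. pmf (\<rho> t (map x [1..<t]) (map a [1..<Suc t])) (x t))"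

definition log_loss :: "predictor \<Rightarrow> (nat \<Rightarrow> bool) \<Rightarrow> (nat \<Rightarrow> bool list) \<Rightarrow> nat \<Rightarrow> ereal" where
  "log_loss \<rho> x a n =
     (if seq_prob \<rho> x a n = 0 then \<infinity> else ereal (- log 2 (seq_prob \<rho> x a n)))"

end

theory Submission
  imports Defs
begin

text \<open>Probe the coordinates one at a time: at time s \<le> d the side information is the
all-ones vector with coordinate s switched off, so the label at time s is 1 exactly when
s \<notin> S. The first d labels can therefore be chosen freely by choosing S, and an adversary
chooses each of them to be a label to which the predictor assigns probability at most 1/2.
The probability of the whole sequence is then at most 2^-d, i.e. the log-loss is at least d.\<close>

lemma seq_prob_nonneg: "seq_prob \<rho> x a n \<ge> 0"
  unfolding seq_prob_def by (simp add: prod_nonneg)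

lemma seq_prob_le_half_power:
  assumes "k \<le> n"
    and half: "\<And>t. t \<in> {1..k} \<Longrightarrow> pmf (\<rho> t (map x [1..<t]) (map a [1..<Suc t])) (x t) \<le> 1/2"
  shows "seq_prob \<rho> x a n \<le> (1/2) ^ k"
proof -
  define f where "f t = pmf (\<rho> t (map x [1..<t]) (map a [1..<Suc t])) (x t)" for t
  have "{1..n} = {1..k} \<union> {Suc k..n}" using \<open>k \<le> n\<close> by auto
  then have "seq_prob \<rho> x a n = prod f {1..k} * prod f {Suc k..n}"
    unfolding seq_prob_def f_def by (simp add: prod.union_disjoint)
  also have "\<dots> \<le> (1/2) ^ k * 1"
  proof (rule mult_mono)
    have "prod f {1..k} \<le> (\<Prod>t\<in>{1..k}. 1/2)"
      unfolding f_def using half by (intro prod_mono) auto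
    then show "prod f {1..k} \<le> (1/2) ^ k" by simp
    show "prod f {Suc k..n} \<le> 1"
      by (rule prod_le_1) (simp_all add: f_def pmf_le_1)
  qed (simp_all add: f_def prod_nonneg)
  finally show ?thesis by simp
qed

lemma log_loss_ge_of_seq_prob_le:
  assumes "seq_prob \<rho> x a n \<le> (1/2) ^ k"
  shows "log_loss \<rho> x a n \<ge> ereal (real k)"
proof (cases "seq_prob \<rho> x a n = 0")
  case False
  then have "seq_prob \<rho> x a n > 0" using seq_prob_nonneg[of \<rho> x a n] by simp
  then have "log 2 (seq_prob \<rho> x a n) \<le> log 2 ((1/2) ^ k)" using assms by simp
  also have "\<dots> = - real k" by (simp add: log_nat_power log_divide)
  finally show ?thesis using False by (simp add: log_loss_def)
qed (simp add: log_loss_def)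

lemma pmf_less_likely_le_half: "pmf (p :: bool pmf) (pmf p True \<le> 1/2) \<le> 1/2"
  by (cases "pmf p True \<le> 1/2") (simp_all add: pmf_False_conv_True)

primrec adversarial_labels :: "predictor \<Rightarrow> (nat \<Rightarrow> bool list) \<Rightarrow> nat \<Rightarrow> bool list" where
  "adversarial_labels \<rho> a 0 = []"
| "adversarial_labels \<rho> a (Suc n) = adversarial_labels \<rho> a n @
     [pmf (\<rho> (Suc n) (adversarial_labels \<rho> a n) (map a [1..<Suc (Suc n)])) True \<le> 1/2]"

lemma length_adversarial_labels [simp]: "length (adversarial_labels \<rho> a n) = n"
  by (induction n) auto

lemma take_adversarial_labels:
  "j \<le> n \<Longrightarrow> take j (adversarial_labels \<rho> a n) = adversarial_labels \<rho> a j"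
  by (induction n) (auto simp: le_Suc_eq)

lemma pmf_adversarial_label_le_half:
  assumes "j < n"
  shows "pmf (\<rho> (Suc j) (take j (adversarial_labels \<rho> a n)) (map a [1..<Suc (Suc j)]))
           (adversarial_labels \<rho> a n ! j) \<le> 1/2"
proof -
  have "adversarial_labels \<rho> a n ! j = take (Suc j) (adversarial_labels \<rho> a n) ! j"
    by simp
  also have "\<dots> = adversarial_labels \<rho> a (Suc j) ! j"
    using assms by (simp only: take_adversarial_labels Suc_leI)
  finally show ?thesis
    using assms pmf_less_likely_le_half by (simp add: take_adversarial_labels nth_append)
qed

lemma seq_prob_adversarial_le:
  assumes follows: "map x [1..<Suc k] = adversarial_labels \<rho> a k" and "k \<le> n"
  shows "seq_prob \<rho> x a n \<le> (1/2) ^ k"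
proof (rule seq_prob_le_half_power[OF \<open>k \<le> n\<close>])
  fix t assume "t \<in> {1..k}"
  then obtain j where t: "t = Suc j" and "j < k" by (cases t) auto
  have "map x [1..<t] = take j (adversarial_labels \<rho> a k)"
    using \<open>j < k\<close> by (simp del: upt_Suc flip: follows add: t take_map)
  moreover have "x t = adversarial_labels \<rho> a k ! j"
    using \<open>j < k\<close> by (simp del: upt_Suc flip: follows add: t)
  ultimately show "pmf (\<rho> t (map x [1..<t]) (map a [1..<Suc t])) (x t) \<le> 1/2"
    using pmf_adversarial_label_le_half[OF \<open>j < k\<close>] by (simp add: t)
qed

definition probe_info :: "nat \<Rightarrow> nat \<Rightarrow> bool list" where
  "probe_info d s = map (\<lambda>i. i \<noteq> s - 1) [0..<d]"

lemma length_probe_info [simp]: "length (probe_info d s) = d"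
  by (simp add: probe_info_def)

lemma hS_probe_info:
  "S \<subseteq> {0..<d} \<Longrightarrow> s \<in> {1..d} \<Longrightarrow> hS S (probe_info d s) \<longleftrightarrow> s - 1 \<notin> S"
  by (force simp: hS_def probe_info_def)

lemma probe_info_realises_labels:
  assumes "length B = d"
  shows "\<exists>S \<subseteq> {0..<d}. map (\<lambda>t. hS S (probe_info d t)) [1..<Suc d] = B"
proof (intro exI conjI)
  let ?S = "{i. i < d \<and> \<not> B ! i}"
  show S: "?S \<subseteq> {0..<d}" by auto
  show "map (\<lambda>t. hS ?S (probe_info d t)) [1..<Suc d] = B"
    by (rule nth_equalityI) (auto simp del: upt_Suc simp: assms hS_probe_info[OF S])
qed

theorem mainTheorem4:
  fixes d :: nat
  shows "\<exists>a :: nat \<Rightarrow> bool list.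
           (\<forall>t\<in>{1..2^d}. length (a t) = d) \<and>
           (\<forall>\<rho> :: predictor. \<exists>S. S \<subseteq> {0..<d} \<and>
              log_loss \<rho> (\<lambda>t. hS S (a t)) a (2^d) \<ge> ereal (real d))"
proof (intro exI[of _ "probe_info d"] conjI allI)
  show "\<forall>t\<in>{1..2^d}. length (probe_info d t) = d" by simp
  fix \<rho> :: predictor
  obtain S where "S \<subseteq> {0..<d}" and follows:
    "map (\<lambda>t. hS S (probe_info d t)) [1..<Suc d] = adversarial_labels \<rho> (probe_info d) d"
    using probe_info_realises_labels[of "adversarial_labels \<rho> (probe_info d) d"] by auto
  have "d \<le> 2 ^ d" using less_exp[of d] by simp
  then have "seq_prob \<rho> (\<lambda>t. hS S (probe_info d t)) (probe_info d) (2^d) \<le> (1/2) ^ d"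
    using seq_prob_adversarial_le[OF follows] by blast
  then show "\<exists>S. S \<subseteq> {0..<d} \<and>
      log_loss \<rho> (\<lambda>t. hS S (probe_info d t)) (probe_info d) (2^d) \<ge> ereal (real d)"
    using \<open>S \<subseteq> {0..<d}\<close> log_loss_ge_of_seq_prob_le by blast
qed

end
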